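(* For any multi-stage concurrent game structure $\mathcal{G}$, any set of agents $A$ of $\mathcal{G}$ and any quantifier-free $\texttt{HyperATL}^*$ formula $\varphi$ over path variables $\pi_1,\pi_2$: if $\mathcal{G}\models[\forall\pi_1.\langle\langle A\rangle\rangle\pi_2.]\,\varphi$ then $\mathcal{G}\models\forall\pi_1.\langle\langle A\rangle\rangle\pi_2.\,\varphi$.
   Context: A multi-stage concurrent game structure (MSCGS) is $\mathcal{G}=(S,s_0,\Xi,\mathscr{M},\delta,d,\mathbf{AP},\ell)$: finite states $S$, initial state $s_0$, finite agents $\Xi$, finite moves $\mathscr{M}$, transition function $\delta:S\times(\Xi\to\mathscr{M})\to S$, stage function $d:\Xi\to\mathbb{N}$, atomic propositions $\mathbf{AP}$, labelling $\ell:S\to2^{\mathbf{AP}}$. Quantifier-free formulas are built from $a_\pi$ ($a\in\mathbf{AP}$), Boolean connectives, $\bigcirc$ and $\mathcal{U}$, and are evaluated synchronously on a path assignment ($a_\pi$: $a$ holds in the current state of the path bound to $\pi$). Sequential semantics: a strategy for $\xi$ is $f_\xi:S^+\times(\{\xi'\mid d(\xi')<d(\xi)\}\to\mathscr{M})\to\mathscr{M}$; $\mathit{out}(\mathcal{G},s,F_A)$ is the set of $u\in S^\omega$ with $u(0)=s$ such that for all $i$ there is a global move vector $\sigma$ with $\delta(u(i),\sigma)=u(i+1)$ and $\sigma(\xi)=f_\xi(u[0,i],\sigma_{\mid\{\xi'\mid d(\xi')<d(\xi)\}})$ for all $\xi\in A$. $\Pi\models\langle\langle A\rangle\rangle\pi.\psi$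 iff there exist strategies $F_A$ for the agents in $A$ such that for all $t\in\mathit{out}(\mathcal{G},\Pi(\epsilon)(0),F_A)$, $\Pi[\pi\mapsto t]\models\psi$, where $\Pi(\epsilon)$ is the most recently added path ($\Pi(\epsilon)(0)=s_0$ if $\Pi$ is empty); $\forall\pi$ abbreviates $\langle\langle\emptyset\rangle\rangle\pi$. Thus $\forall\pi_1.\langle\langle A\rangle\rangle\pi_2.\varphi$ means: for every path $t_1$ from $s_0$, the agents in $A$ have strategies (whose choice may depend on $t_1$) such that every outcome $t_2$ from $s_0$ satisfies $\varphi$ together with $t_1$. Parallel semantics: $[\forall\pi_1.\langle\langle A\rangle\rangle\pi_2.]\varphi$ holds (from the empty assignment) iff there are strategies for the agents $\xi\in A$ in copy $2$, each mapping a finite history in $(S\times S)^+$ of pairs of states of both copies, together with the moves already fixed for all agents of stage $<d(\xi)$ in both copies, to a move, such that every outcome $u\in(S\times S)^\omega$ — i.e. $u(0)=(s_0,s_0)$ and for every $i$ there are global move vectors $\sigma_1,\sigma_2$ with $u(i+1)=(\delta(u(i)_1,\sigma_1),\delta(u(i)_2,\sigma_2))$ and $\sigma_2(\xi)$ given by the strategy of $\xi$ for every $\xi\in A$ — satisfies $\varphi$ under $\pi_1\mapsto$ first components, $\pi_2\mapsto$ second components. *)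

theory Defs
  imports Main
begin

text \<open>Multi-stage concurrent game structures. States, agents and moves are the
  type parameters 's, 'ag, 'm; their finiteness is imposed via the sort finite
  in the theorem.\<close>

record ('s, 'ag, 'm, 'ap) mscgs =
  init  :: 's
  trans :: "'s \<Rightarrow> ('ag \<Rightarrow> 'm) \<Rightarrow> 's"
  stage :: "'ag \<Rightarrow> nat"
  label :: "'s \<Rightarrow> 'ap set"

datatype pvar = Pi1 | Pi2

datatype 'ap qf =
    Ap 'ap pvar
  | Neg "'ap qf"
  | Conj "'ap qf" "'ap qf"
  | Disj "'ap qf" "'ap qf"
  | Next "'ap qf"
  | Until "'ap qf" "'ap qf"

fun qf_sat :: "('s \<Rightarrow> 'ap set) \<Rightarrow> (pvar \<Rightarrow> nat \<Rightarrow> 's) \<Rightarrow> nat \<Rightarrow> 'ap qf \<Rightarrow> bool" where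
  "qf_sat l P i (Ap a p) = (a \<in> l (P p i))"
| "qf_sat l P i (Neg f) = (\<not> qf_sat l P i f)"
| "qf_sat l P i (Conj f g) = (qf_sat l P i f \<and> qf_sat l P i g)"
| "qf_sat l P i (Disj f g) = (qf_sat l P i f \<or> qf_sat l P i g)"
| "qf_sat l P i (Next f) = qf_sat l P (Suc i) f"
| "qf_sat l P i (Until f g) =
     (\<exists>k\<ge>i. qf_sat l P k g \<and> (\<forall>j. i \<le> j \<and> j < k \<longrightarrow> qf_sat l P j f))"

definition lower_moves :: "('s, 'ag, 'm, 'ap) mscgs \<Rightarrow> 'ag \<Rightarrow> ('ag \<Rightarrow> 'm) \<Rightarrow> ('ag \<rightharpoonup> 'm)" where
  "lower_moves G xi \<sigma> = (Some \<circ> \<sigma>) |` {xi'. stage G xi' < stage G xi}"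

text \<open>Sequential semantics: a strategy maps a nonempty finite history and the
  moves of lower-stage agents to a move.\<close>
type_synonym ('s, 'ag, 'm) strategy = "'s list \<Rightarrow> ('ag \<rightharpoonup> 'm) \<Rightarrow> 'm"

definition out :: "('s, 'ag, 'm, 'ap) mscgs \<Rightarrow> 's \<Rightarrow> ('ag \<Rightarrow> ('s, 'ag, 'm) strategy) \<Rightarrow> 'ag set
                    \<Rightarrow> (nat \<Rightarrow> 's) set" where
  "out G s F A = {u. u 0 = s \<and> (\<forall>i. \<exists>\<sigma>. trans G (u i) \<sigma> = u (Suc i) \<and>
       (\<forall>xi\<in>A. \<sigma> xi = F xi (map u [0..<Suc i]) (lower_moves G xi \<sigma>)))}"

text \<open>G |= forall pi1. <<A>> pi2. phi  (sequential semantics, empty initial assignment).\<close>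
definition seq_sat :: "('s, 'ag, 'm, 'ap) mscgs \<Rightarrow> 'ag set \<Rightarrow> 'ap qf \<Rightarrow> bool" where
  "seq_sat G A \<phi> =
    (\<exists>F0. \<forall>t1 \<in> out G (init G) F0 {}.
       \<exists>F. \<forall>t2 \<in> out G (t1 0) F A.
          qf_sat (label G) (\<lambda>p. case p of Pi1 \<Rightarrow> t1 | Pi2 \<Rightarrow> t2) 0 \<phi>)"

text \<open>Parallel semantics: strategies for copy 2 see the joint history of both
  copies and the already fixed moves of lower-stage agents in both copies.\<close>
type_synonym ('s, 'ag, 'm) pstrategy =
  "('s \<times> 's) list \<Rightarrow> ('ag \<rightharpoonup> 'm) \<Rightarrow> ('ag \<rightharpoonup> 'm) \<Rightarrow> 'm"

definition par_out :: "('s, 'ag, 'm, 'ap) mscgs \<Rightarrow> ('ag \<Rightarrow> ('s, 'ag, 'm) pstrategy) \<Rightarrow> 'ag set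
                        \<Rightarrow> (nat \<Rightarrow> 's \<times> 's) set" where
  "par_out G F A = {u. u 0 = (init G, init G) \<and> (\<forall>i. \<exists>\<sigma>1 \<sigma>2.
       u (Suc i) = (trans G (fst (u i)) \<sigma>1, trans G (snd (u i)) \<sigma>2) \<and>
       (\<forall>xi\<in>A. \<sigma>2 xi = F xi (map u [0..<Suc i]) (lower_moves G xi \<sigma>1) (lower_moves G xi \<sigma>2)))}"

text \<open>G |= [forall pi1. <<A>> pi2.] phi  (parallel semantics).\<close>
definition par_sat :: "('s, 'ag, 'm, 'ap) mscgs \<Rightarrow> 'ag set \<Rightarrow> 'ap qf \<Rightarrow> bool" where
  "par_sat G A \<phi> =
    (\<exists>F. \<forall>u \<in> par_out G F A.
       qf_sat (label G) (\<lambda>p. case p of Pi1 \<Rightarrow> fst \<circ> u | Pi2 \<Rightarrow> snd \<circ> u) 0 \<phi>)"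

end

theory Submission
  imports Defs
begin

text \<open>Once the path \<open>t1\<close> of the first copy is fixed, the copy-2 strategies of the
  parallel semantics can be simulated sequentially: the joint history is recovered by
  zipping the own history with the corresponding prefix of \<open>t1\<close>, and the moves of
  copy 1 are replaced by a fixed choice of move vectors realising the steps of \<open>t1\<close>.
  Every outcome of the simulating strategies, paired with \<open>t1\<close>, is then an outcome of
  the parallel game, so it satisfies the formula.\<close>

lemma out_no_agents:
  "out G s F {} = {u. u 0 = s \<and> (\<forall>i. \<exists>\<sigma>. trans G (u i) \<sigma> = u (Suc i))}"
  by (simp add: out_def)

definition seq_of_par_strategy ::
  "('s, 'ag, 'm, 'ap) mscgs \<Rightarrow> ('ag \<Rightarrow> ('s, 'ag, 'm) pstrategy) \<Rightarrow> (nat \<Rightarrow> 's)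
     \<Rightarrow> (nat \<Rightarrow> 'ag \<Rightarrow> 'm) \<Rightarrow> 'ag \<Rightarrow> ('s, 'ag, 'm) strategy" where
  "seq_of_par_strategy G F t1 \<sigma>1 xi hist lm =
     F xi (zip (map t1 [0..<length hist]) hist) (lower_moves G xi (\<sigma>1 (length hist - 1))) lm"

lemma zip_outcome_in_par_out:
  assumes t1_init: "t1 0 = init G"
    and t1_step: "\<And>i. trans G (t1 i) (\<sigma>1 i) = t1 (Suc i)"
    and t2: "t2 \<in> out G (init G) (seq_of_par_strategy G F t1 \<sigma>1) A"
  shows "(\<lambda>i. (t1 i, t2 i)) \<in> par_out G F A"
  unfolding par_out_def
proof (intro CollectI conjI allI)
  show "(t1 0, t2 0) = (init G, init G)"
    using t1_init t2 by (simp add: out_def)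
next
  fix i
  obtain \<sigma>2 where t2_step: "trans G (t2 i) \<sigma>2 = t2 (Suc i)"
    and moves: "\<forall>xi\<in>A. \<sigma>2 xi =
      seq_of_par_strategy G F t1 \<sigma>1 xi (map t2 [0..<Suc i]) (lower_moves G xi \<sigma>2)"
    using t2 unfolding out_def by blast
  have history: "map (\<lambda>i. (t1 i, t2 i)) [0..<Suc i] =
      zip (map t1 [0..<Suc i]) (map t2 [0..<Suc i])"
    by (simp add: zip_map_map zip_same_conv_map comp_def)
  show "\<exists>\<sigma>1' \<sigma>2'. (t1 (Suc i), t2 (Suc i)) =
        (trans G (fst (t1 i, t2 i)) \<sigma>1', trans G (snd (t1 i, t2 i)) \<sigma>2') \<and>
      (\<forall>xi\<in>A. \<sigma>2' xi = F xi (map (\<lambda>i. (t1 i, t2 i)) [0..<Suc i])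
                          (lower_moves G xi \<sigma>1') (lower_moves G xi \<sigma>2'))"
    using t1_step[of i] t2_step moves history
    by (intro exI[of _ "\<sigma>1 i"] exI[of _ \<sigma>2]) (simp add: seq_of_par_strategy_def)
qed

lemma zip_path_assignment:
  "(\<lambda>p. case p of Pi1 \<Rightarrow> fst \<circ> (\<lambda>i. (t1 i, t2 i)) | Pi2 \<Rightarrow> snd \<circ> (\<lambda>i. (t1 i, t2 i)))
     = (\<lambda>p. case p of Pi1 \<Rightarrow> t1 | Pi2 \<Rightarrow> t2)"
  by (auto simp: fun_eq_iff split: pvar.split)

theorem mainTheorem7:
  fixes G :: "('s::finite, 'ag::finite, 'm::finite, 'ap) mscgs"
    and A :: "'ag set"
    and \<phi> :: "'ap qf"
  assumes "par_sat G A \<phi>"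
  shows "seq_sat G A \<phi>"
  unfolding seq_sat_def
proof (rule exI[of _ undefined], intro ballI)
  \<comment> \<open>no agent is constrained in \<open>out G _ _ {}\<close>, so any strategy profile will do\<close>
  obtain F where F: "\<forall>u \<in> par_out G F A.
      qf_sat (label G) (\<lambda>p. case p of Pi1 \<Rightarrow> fst \<circ> u | Pi2 \<Rightarrow> snd \<circ> u) 0 \<phi>"
    using assms unfolding par_sat_def by blast
  fix t1
  assume "t1 \<in> out G (init G) undefined {}"
  then have t1_init: "t1 0 = init G" and "\<forall>i. \<exists>\<sigma>. trans G (t1 i) \<sigma> = t1 (Suc i)"
    by (simp_all add: out_no_agents)
  then obtain \<sigma>1 where t1_step: "\<And>i. trans G (t1 i) (\<sigma>1 i) = t1 (Suc i)"
    by metis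
  show "\<exists>F'. \<forall>t2 \<in> out G (t1 0) F' A.
      qf_sat (label G) (\<lambda>p. case p of Pi1 \<Rightarrow> t1 | Pi2 \<Rightarrow> t2) 0 \<phi>"
  proof (rule exI[of _ "seq_of_par_strategy G F t1 \<sigma>1"], intro ballI)
    fix t2
    assume "t2 \<in> out G (t1 0) (seq_of_par_strategy G F t1 \<sigma>1) A"
    then have "(\<lambda>i. (t1 i, t2 i)) \<in> par_out G F A"
      using zip_outcome_in_par_out[OF t1_init t1_step] t1_init by simp
    then have "qf_sat (label G) (\<lambda>p. case p of Pi1 \<Rightarrow> fst \<circ> (\<lambda>i. (t1 i, t2 i))
                                        | Pi2 \<Rightarrow> snd \<circ> (\<lambda>i. (t1 i, t2 i))) 0 \<phi>"
      using F by blast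
    then show "qf_sat (label G) (\<lambda>p. case p of Pi1 \<Rightarrow> t1 | Pi2 \<Rightarrow> t2) 0 \<phi>"
      by (simp only: zip_path_assignment)
  qed
qed

end
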